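(* In the setting described in the context, for every $(u_1,\dots,u_n)\in\widetilde C(U,W,\alpha)$ we have $u_i(p_j)=j$ for all $1\le j<i\le n$. In particular $\mathrm{fix}_{(\alpha_i,n]}(u_i,u_{i+1})\cap[a,i]\subseteq[a,0]$ for every $i\in[n-1]$, and hence $\widetilde{\mathrm{wt}}^n_\alpha(u_1,\dots,u_n)(y_1,\dots,y_{n-1};\mathbf y)$ is a product of pairwise distinct factors $(y_i-y_j)$ with $i\in[n-1]$ and $j\in[a,0]$.
   Context: Permutations: for integers $a\le n$, $S_{[a,n]}$ is the set of bijections of $\mathbb Z$ fixing every integer outside $[a,n]$, one-line notation $[w(a),\dots,w(n)]$; $\tau_{i,j}$ swaps $i<j$, $u\tau_{i,j}=u\circ\tau_{i,j}$; $\ell(u)$ = number of inversions; $u\lessdot_k u\tau_{i,j}$ if $i\le k<j$ and $\ell(u\tau_{i,j})=\ell(u)+1$; $u\xrightarrow{k}w$ if there is a chain $u=v_1\lessdot_k\cdots\lessdot_k v_s=w$ ($s\ge1$), $v_{t+1}=v_t\tau_{i_t,j_t}$, with $v_1(i_1)<\cdots<v_{s-1}(i_{s-1})$. $\mathrm{fix}_I(u,v)=\{u(t):t\in I,\ u(t)=v(t)\}$. For $\beta=(\beta_1,\dots,\beta_m)$, $C(u,w,\beta)$ is the set of $(v_1,\dots,v_{m+1})$ with $v_1=u$, $v_{m+1}=w$, $v_i\xrightarrow{\beta_i}v_{i+1}$. Setting: fix $a\le0<n$ and $A=\{(r,c):1\le r\le n,\ a\le c\le r\}$. Let $\gamma=(\gamma_N,\gamma_E,\gamma_S,\gamma_W)$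 be a boundary condition of $A$: $\gamma_N(c)$ ($c\in[a,n]$) is the label of the pipe entering through the top edge of the top cell $(\max(c,1),c)$ of column $c$ or $\varnothing$; $\gamma_E(r)$ that of the pipe entering through the right edge of $(r,r)$ or $\varnothing$; $\gamma_S(c)$ that of the pipe exiting through the bottom edge of $(n,c)$ or $\varnothing$; $\gamma_W(r)$ that of the pipe exiting through the left edge of $(r,a)$ or $\varnothing$. Assume $\gamma_S(c)\neq\varnothing$ for $c\in[a,n]$, $\gamma_W(r)=\varnothing$ and $\gamma_N(r)\ne\varnothing$ for $r\in[n]$, and the non-$\varnothing$ values of $\gamma_N,\gamma_E$ are exactly $a,\dots,n$, increasing along the order: top edges of columns $a,\dots,1$, right edge of row 1, top edge of column 2, right edge of row 2, …, top edge of column $n$, right edge of row $n$ (the values of $\gamma_S$ are then also exactly $a,\dots,n$). Put $p_c=\gamma_N(c)$ ($c\in[n]$), $\alpha_i=p_{i+1}-1$, $\alpha=(\alpha_1,\dots,\alpha_{n-1})$. $P_r=\{w\in S_{[a,n]}:w(p_j)=j\ \forall j\in(r,n]\}$; $\iota_r:P_r\to S_{[a,r]}$ deletes the values $r+1,\dots,n$ from one-line notation. $W\in P_1$: $\iota_1(W)(\ell)=\gamma_N^{-1}(\ell)$ for $\ell\in[a,p_1]$ and $\iota_1(W)$ decreasing on $(p_1,1]$. $U\in S_{[a,n]}$: $U(\ell)=\gamma_S^{-1}(\ell)$ for $\ell\in[a,n]$. $\widetilde C(U,W,\alpha)$ is the set of $(u_1,\dots,u_n)\in C(U,W,\alpha)$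 with $i\notin\mathrm{fix}_{(\alpha_i,n]}(u_i,u_{i+1})$ for all $i\in[n-1]$, and $\widetilde{\mathrm{wt}}^n_\alpha(u_1,\dots,u_n)(x_1,\dots,x_{n-1};\mathbf y)=\prod_{i\in[n-1]}\prod_{j\in\mathrm{fix}_{(\alpha_i,n]}(u_i,u_{i+1})\cap[a,i]}(x_i-y_j)$. *)

theory Defs
  imports Main
begin

definition Sperm :: "int \<Rightarrow> int \<Rightarrow> (int \<Rightarrow> int) set" where
  "Sperm a n = {w. bij w \<and> (\<forall>t. t \<notin> {a..n} \<longrightarrow> w t = t)}"

text \<open>The transposition swapping i and j; u tau_{i,j} is u o tau i j.\<close>
definition tau :: "int \<Rightarrow> int \<Rightarrow> int \<Rightarrow> int" where
  "tau i j = (\<lambda>t. if t = i then j else if t = j then i else t)"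

definition len :: "(int \<Rightarrow> int) \<Rightarrow> nat" where
  "len u = card {(s, t). s < t \<and> u t < u s}"

definition kcover :: "int \<Rightarrow> (int \<Rightarrow> int) \<Rightarrow> int \<Rightarrow> int \<Rightarrow> bool" where
  "kcover k u i j \<longleftrightarrow> i \<le> k \<and> k < j \<and> len (u \<circ> tau i j) = len u + 1"

definition kpath :: "int \<Rightarrow> (int \<Rightarrow> int) \<Rightarrow> (int \<Rightarrow> int) \<Rightarrow> bool" where
  "kpath k u w \<longleftrightarrow> (\<exists>vs ps. length vs = Suc (length ps) \<and> hd vs = u \<and> last vs = w \<and>
     (\<forall>t < length ps. kcover k (vs ! t) (fst (ps ! t)) (snd (ps ! t)) \<and>
         vs ! Suc t = (vs ! t) \<circ> tau (fst (ps ! t)) (snd (ps ! t))) \<and>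
     (\<forall>t. Suc t < length ps \<longrightarrow> (vs ! t) (fst (ps ! t)) < (vs ! Suc t) (fst (ps ! Suc t))))"

text \<open>Membership of a tuple (v_1,...,v_{m+1}) (indices 1..m+1) in C(u,w,beta), beta indexed 1..m.\<close>
definition inC :: "(int \<Rightarrow> int) \<Rightarrow> (int \<Rightarrow> int) \<Rightarrow> int \<Rightarrow> (int \<Rightarrow> int) \<Rightarrow> (int \<Rightarrow> int \<Rightarrow> int) \<Rightarrow> bool" where
  "inC u w m beta v \<longleftrightarrow> v 1 = u \<and> v (m + 1) = w \<and> (\<forall>i \<in> {1..m}. kpath (beta i) (v i) (v (i + 1)))"

definition fixI :: "int set \<Rightarrow> (int \<Rightarrow> int) \<Rightarrow> (int \<Rightarrow> int) \<Rightarrow> int set" where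
  "fixI I u v = {u t | t. t \<in> I \<and> u t = v t}"

text \<open>Membership in C-tilde(U,W,alpha); alpha indexed 1..n-1, tuple indexed 1..n.\<close>
definition inCtilde :: "int \<Rightarrow> (int \<Rightarrow> int) \<Rightarrow> (int \<Rightarrow> int) \<Rightarrow> (int \<Rightarrow> int) \<Rightarrow> (int \<Rightarrow> int \<Rightarrow> int) \<Rightarrow> bool" where
  "inCtilde n U W alpha v \<longleftrightarrow> inC U W (n - 1) alpha v \<and>
     (\<forall>i \<in> {1..n-1}. i \<notin> fixI {alpha i<..n} (v i) (v (i + 1)))"

text \<open>The weight wt-tilde^n_alpha(v)(x;y), evaluated in an arbitrary commutative ring.\<close>
definition wt :: "int \<Rightarrow> int \<Rightarrow> (int \<Rightarrow> int) \<Rightarrow> (int \<Rightarrow> int \<Rightarrow> int) \<Rightarrow> (int \<Rightarrow> 'r::comm_ring_1) \<Rightarrow> (int \<Rightarrow> 'r) \<Rightarrow> 'r" where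
  "wt a n alpha v x y = (\<Prod>i \<in> {1..n-1}. \<Prod>j \<in> fixI {alpha i<..n} (v i) (v (i + 1)) \<inter> {a..i}. (x i - y j))"

text \<open>iota_r: delete values r+1..n from the one-line notation [w(a),...,w(n)];
  the result evaluated at l in [a,r].\<close>
definition iota :: "int \<Rightarrow> int \<Rightarrow> int \<Rightarrow> (int \<Rightarrow> int) \<Rightarrow> int \<Rightarrow> int" where
  "iota a n r w l = (filter (\<lambda>x. x \<le> r) (map w [a..n])) ! nat (l - a)"

definition Pset :: "int \<Rightarrow> int \<Rightarrow> (int \<Rightarrow> int) \<Rightarrow> int \<Rightarrow> (int \<Rightarrow> int) set" where
  "Pset a n p r = {w \<in> Sperm a n. \<forall>j \<in> {r<..n}. w (p j) = j}"

text \<open>Boundary conditions: None = empty label. gN c top of column c (c in [a,n]),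
  gE r right edge of row r, gS c bottom of column c, gW r left edge of row r (r in [1,n]).
  Order of N/E edges: N(a),...,N(1),E(1),N(2),E(2),...,N(n),E(n); N(c) precedes E(r) iff c <= r.\<close>
definition std_bc :: "int \<Rightarrow> int \<Rightarrow> (int \<Rightarrow> int option) \<Rightarrow> (int \<Rightarrow> int option) \<Rightarrow>
    (int \<Rightarrow> int option) \<Rightarrow> (int \<Rightarrow> int option) \<Rightarrow> bool" where
  "std_bc a n gN gE gS gW \<longleftrightarrow>
     (\<forall>c \<in> {a..n}. gS c \<noteq> None) \<and>
     (\<forall>r \<in> {1..n}. gW r = None) \<and>
     (\<forall>r \<in> {1..n}. gN r \<noteq> None) \<and>
     (\<forall>c \<in> {a..n}. \<forall>c' \<in> {a..n}. \<forall>x y. gN c = Some x \<and> gN c' = Some y \<and> c < c' \<longrightarrow> x < y) \<and>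
     (\<forall>r \<in> {1..n}. \<forall>r' \<in> {1..n}. \<forall>x y. gE r = Some x \<and> gE r' = Some y \<and> r < r' \<longrightarrow> x < y) \<and>
     (\<forall>c \<in> {a..n}. \<forall>r \<in> {1..n}. \<forall>x y. gN c = Some x \<and> gE r = Some y \<longrightarrow>
         (c \<le> r \<longrightarrow> x < y) \<and> (r < c \<longrightarrow> y < x)) \<and>
     {x. \<exists>c \<in> {a..n}. gN c = Some x} \<union> {x. \<exists>r \<in> {1..n}. gE r = Some x} = {a..n} \<and>
     bij_betw (\<lambda>c. the (gS c)) {a..n} {a..n}"

definition pcol :: "(int \<Rightarrow> int option) \<Rightarrow> int \<Rightarrow> int" where
  "pcol gN c = the (gN c)"

definition alph :: "(int \<Rightarrow> int option) \<Rightarrow> int \<Rightarrow> int" where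
  "alph gN i = pcol gN (i + 1) - 1"

end

theory Submission
  imports Defs
begin

(* Along a k-Bruhat chain each cover swaps a smaller value at a position <= k with a larger
   value at a position > k. Hence entries at positions <= k only grow, entries at positions > k
   only shrink, and a value leaving a position > k is dominated by a value arriving at a
   position <= k.
   Since p_j <= alpha_l for l >= j, the entry u_i(p_j) with j < i is squeezed between
   u_{j+1}(p_j) and W(p_j) = j, so it suffices to show u_{i+1}(p_i) = i. In u_i the value i sits
   at some position t; if t > alpha_i it has to move (this is the tilde condition). Either way
   some position q <= alpha_i carries a value >= i in u_{i+1}, hence in W, which forces q = p_i.
   A value x in [1, i] fixed at a position t > alpha_i is then impossible: x = i is excluded by
   the tilde condition, and x < i gives t = p_x <= alpha_i. *)

lemma Sperm_maps_into:
  assumes "u \<in> Sperm lo hi" "t \<in> {lo..hi}"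
  shows "u t \<in> {lo..hi}"
proof (rule ccontr)
  assume out: "u t \<notin> {lo..hi}"
  have "bij u" and outside: "\<forall>t. t \<notin> {lo..hi} \<longrightarrow> u t = t"
    using assms(1) by (auto simp: Sperm_def)
  then have "u (u t) = u t" using out by blast
  then have "u t = t" using \<open>bij u\<close> by (meson bij_is_inj injD)
  then show False using assms(2) out by simp
qed

lemma tau_tau [simp]: "tau i j (tau i j t) = t"
  by (simp add: tau_def)

lemma bij_tau: "bij (tau i j)"
  by (metis bijI' tau_tau)

definition fin_perm :: "(int \<Rightarrow> int) \<Rightarrow> bool" where
  "fin_perm u \<longleftrightarrow> (\<exists>lo hi. u \<in> Sperm lo hi)"

lemma fin_perm_bij: "fin_perm u \<Longrightarrow> bij u"
  by (auto simp: fin_perm_def Sperm_def)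

lemma Sperm_comp_tau:
  assumes "u \<in> Sperm lo hi"
  shows "u \<circ> tau i j \<in> Sperm (min lo (min i j)) (max hi (max i j))"
  using assms bij_comp[OF bij_tau, of u i j]
  by (auto simp: Sperm_def tau_def min_def max_def split: if_splits)

lemma fin_perm_comp_tau: "fin_perm u \<Longrightarrow> fin_perm (u \<circ> tau i j)"
  unfolding fin_perm_def using Sperm_comp_tau by blast

lemma finite_inversions:
  assumes "u \<in> Sperm lo hi"
  shows "finite {(s, t). s < t \<and> u t < u s}"
proof (rule finite_subset)
  have outside: "\<forall>t. t \<notin> {lo..hi} \<longrightarrow> u t = t" using assms by (simp add: Sperm_def)
  have into: "\<And>t. t \<in> {lo..hi} \<Longrightarrow> u t \<in> {lo..hi}" using Sperm_maps_into[OF assms] .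
  show "{(s, t). s < t \<and> u t < u s} \<subseteq> {lo..hi} \<times> {lo..hi}"
  proof clarify
    fix s t assume st: "s < t" "u t < u s"
    show "s \<in> {lo..hi} \<and> t \<in> {lo..hi}"
      using outside into st by (smt (verit) atLeastAtMost_iff)
  qed
qed simp

lemma len_comp_tau_less:
  assumes u: "u \<in> Sperm lo hi" and "i < j" "u j < u i"
  shows "len (u \<circ> tau i j) < len u"
proof -
  define Iu where "Iu = {(s, t). s < t \<and> u t < u s}"
  define Iw where "Iw = {(s, t). s < t \<and> (u \<circ> tau i j) t < (u \<circ> tau i j) s}"
  \<comment> \<open>Inversions of the swapped permutation with an end outside [i,j] are moved by the swap;
      those inside [i,j] are kept. This injects them into the inversions of u other than (i,j).\<close>
  define f where "f = (\<lambda>(s::int, t::int). if s < i \<or> j < t then (tau i j s, tau i j t) else (s, t))"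
  have "f (f x) = x" for x
    using \<open>i < j\<close> by (cases x) (auto simp: f_def tau_def)
  then have "inj_on f Iw" by (metis inj_onI)
  moreover have "f ` Iw \<subseteq> Iu - {(i, j)}"
    using assms(2,3) by (auto simp: Iu_def Iw_def f_def tau_def split: if_splits)
  moreover have fin: "finite Iu" using finite_inversions[OF u] by (simp add: Iu_def)
  ultimately have "card Iw \<le> card (Iu - {(i, j)})"
    by (meson card_inj_on_le finite_Diff)
  also have "\<dots> < card Iu"
    using fin assms(2,3) by (intro card_Diff1_less) (auto simp: Iu_def)
  finally show ?thesis by (simp add: len_def Iu_def Iw_def)
qed

lemma kcover_less:
  assumes "fin_perm u" "kcover k u i j"
  shows "u i < u j"
proof -
  obtain lo hi where u: "u \<in> Sperm lo hi" using assms(1) fin_perm_def by blast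
  have ij: "i < j" and len: "len (u \<circ> tau i j) = len u + 1"
    using assms(2) by (auto simp: kcover_def)
  have "u i \<noteq> u j" using u ij by (auto simp: Sperm_def dest: bij_is_inj injD)
  moreover have "\<not> u j < u i" using len_comp_tau_less[OF u ij] len by linarith
  ultimately show ?thesis by linarith
qed

definition kmono :: "int \<Rightarrow> (int \<Rightarrow> int) \<Rightarrow> (int \<Rightarrow> int) \<Rightarrow> bool" where
  "kmono k u w \<longleftrightarrow> (\<forall>q\<le>k. u q \<le> w q) \<and> (\<forall>q>k. w q \<le> u q) \<and>
     (\<forall>t>k. w t \<noteq> u t \<longrightarrow> (\<exists>q\<le>k. u t \<le> w q))"

lemma kmono_refl: "kmono k u u"
  by (simp add: kmono_def)

lemma kmono_kcover_comp:
  assumes "fin_perm v" "kcover k v i j" and w: "kmono k (v \<circ> tau i j) w"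
  shows "kmono k v w"
proof -
  let ?v = "v \<circ> tau i j"
  have ij: "i \<le> k" "k < j" using assms(2) by (auto simp: kcover_def)
  have lt: "v i < v j" using kcover_less[OF assms(1,2)] .
  have swap: "?v i = v j" "?v j = v i" "\<And>q. q \<noteq> i \<Longrightarrow> q \<noteq> j \<Longrightarrow> ?v q = v q"
    by (auto simp: tau_def)
  have left: "?v q \<le> w q" if "q \<le> k" for q using w that unfolding kmono_def by blast
  have right: "w q \<le> ?v q" if "k < q" for q using w that unfolding kmono_def by blast
  have moved: "\<exists>q\<le>k. ?v t \<le> w q" if "k < t" "w t \<noteq> ?v t" for t
    using w that unfolding kmono_def by blast
  have "v q \<le> w q" if "q \<le> k" for q
    using left[OF that] swap lt ij that by (cases "q = i") auto
  moreover have "w q \<le> v q" if "k < q" for q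
    using right[OF that] swap lt ij that by (cases "q = j") auto
  moreover have "\<exists>q\<le>k. v t \<le> w q" if "k < t" "w t \<noteq> v t" for t
  proof (cases "t = j")
    case True
    then show ?thesis using left[of i] swap ij by auto
  next
    case False
    then have "?v t = v t" using swap(3) that(1) ij by simp
    then show ?thesis using moved[OF that(1)] that(2) by simp
  qed
  ultimately show ?thesis unfolding kmono_def by blast
qed

definition kstep :: "int \<Rightarrow> (int \<Rightarrow> int) \<Rightarrow> (int \<Rightarrow> int) \<Rightarrow> bool" where
  "kstep k u v \<longleftrightarrow> (\<exists>i j. kcover k u i j \<and> v = u \<circ> tau i j)"

(* The increasing-values condition of kpath is forgotten: the argument never needs it. *)
lemma kpath_imp_rtranclp_kstep:
  assumes "kpath k u w"
  shows "(kstep k)\<^sup>*\<^sup>* u w"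
proof -
  have "(kstep k)\<^sup>*\<^sup>* (hd vs) (last vs)"
    if "length vs = Suc (length ps)"
      and "\<forall>t < length ps. kcover k (vs ! t) (fst (ps ! t)) (snd (ps ! t)) \<and>
             vs ! Suc t = (vs ! t) \<circ> tau (fst (ps ! t)) (snd (ps ! t))"
    for vs and ps :: "(int \<times> int) list"
    using that
  proof (induction ps arbitrary: vs)
    case Nil
    then show ?case by (cases vs) auto
  next
    case (Cons p ps)
    then obtain v vs' where vs: "vs = v # vs'" and len: "length vs' = Suc (length ps)"
      by (cases vs) auto
    have "kcover k v (fst p) (snd p)" "vs' ! 0 = v \<circ> tau (fst p) (snd p)"
      using Cons.prems(2) vs by (auto dest: spec[of _ 0])
    then have "kstep k v (hd vs')"
      using len unfolding kstep_def by (metis hd_conv_nth list.size(3) nat.simps(3))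
    moreover have "(kstep k)\<^sup>*\<^sup>* (hd vs') (last vs')"
      using Cons.IH[OF len] Cons.prems(2) vs by fastforce
    ultimately show ?case using vs len by (auto intro: converse_rtranclp_into_rtranclp)
  qed
  then show ?thesis using assms unfolding kpath_def by blast
qed

lemma rtranclp_kstep_fin_perm:
  "(kstep k)\<^sup>*\<^sup>* u w \<Longrightarrow> fin_perm u \<Longrightarrow> fin_perm w"
  by (induction rule: rtranclp_induct) (auto simp: kstep_def fin_perm_comp_tau)

lemma rtranclp_kstep_kmono:
  "(kstep k)\<^sup>*\<^sup>* u w \<Longrightarrow> fin_perm u \<Longrightarrow> kmono k u w"
proof (induction rule: converse_rtranclp_induct)
  case base
  show ?case by (rule kmono_refl)
next
  case (step u v)
  then show ?case
    by (auto simp: kstep_def intro: kmono_kcover_comp fin_perm_comp_tau)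
qed

lemma int_seq_le:
  fixes g :: "int \<Rightarrow> 'a::preorder"
  assumes "i \<le> i'" "\<And>l. i \<le> l \<Longrightarrow> l < i' \<Longrightarrow> g l \<le> g (l + 1)"
  shows "g i \<le> g i'"
  using assms by (induction i' rule: int_ge_induct) (auto intro: order_trans)

locale tilde_chain =
  fixes a n :: int and p alpha U W :: "int \<Rightarrow> int" and us :: "int \<Rightarrow> int \<Rightarrow> int"
  assumes p_strict_mono: "strict_mono_on {1..n} p"
    and a_le_1: "a \<le> 1" and p_le: "\<And>j. j \<in> {1..n} \<Longrightarrow> p j \<le> n"
    and alpha_eq: "\<And>i. alpha i = p (i + 1) - 1"
    and U_Sperm: "U \<in> Sperm a n" and W_Sperm: "W \<in> Sperm a n"
    and W_p: "\<And>j. j \<in> {1..n} \<Longrightarrow> W (p j) = j"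
    and chain: "inCtilde n U W alpha us"
begin

lemma us_1: "us 1 = U" and us_n: "us n = W"
  and kpath_us: "i \<in> {1..n-1} \<Longrightarrow> kpath (alpha i) (us i) (us (i + 1))"
  and not_fixed: "i \<in> {1..n-1} \<Longrightarrow> i \<notin> fixI {alpha i<..n} (us i) (us (i + 1))"
  using chain by (auto simp: inCtilde_def inC_def)

lemma p_le_alpha: "1 \<le> j \<Longrightarrow> j \<le> l \<Longrightarrow> l \<le> n - 1 \<Longrightarrow> p j \<le> alpha l"
  using strict_mono_onD[OF p_strict_mono, of j "l + 1"] by (simp add: alpha_eq)

lemma alpha_mono: "1 \<le> l \<Longrightarrow> l \<le> l' \<Longrightarrow> l' \<le> n - 1 \<Longrightarrow> alpha l \<le> alpha l'"
  using p_le_alpha[of "l + 1" "l'"] by (cases "l = l'") (auto simp: alpha_eq)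

lemma alpha_less: "l \<in> {1..n-1} \<Longrightarrow> alpha l < n"
  using p_le[of "l + 1"] by (simp add: alpha_eq)

lemma fin_perm_us:
  assumes "1 \<le> i" "i \<le> n"
  shows "fin_perm (us i)"
  using assms
proof (induction i rule: int_ge_induct)
  case base
  show ?case using U_Sperm us_1 by (auto simp: fin_perm_def)
next
  case (step i)
  then have "(kstep (alpha i))\<^sup>*\<^sup>* (us i) (us (i + 1))"
    using kpath_us kpath_imp_rtranclp_kstep by simp
  with step show ?case using rtranclp_kstep_fin_perm by simp
qed

lemma kmono_us: "i \<in> {1..n-1} \<Longrightarrow> kmono (alpha i) (us i) (us (i + 1))"
  using kpath_us kpath_imp_rtranclp_kstep rtranclp_kstep_kmono fin_perm_us by simp

lemma us_increasing:
  assumes "1 \<le> i" "i \<le> i'" "i' \<le> n" "\<And>l. i \<le> l \<Longrightarrow> l < i' \<Longrightarrow> q \<le> alpha l"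
  shows "us i q \<le> us i' q"
proof (rule int_seq_le[where g = "\<lambda>l. us l q"])
  fix l assume "i \<le> l" "l < i'"
  then have "l \<in> {1..n-1}" "q \<le> alpha l" using assms by auto
  then show "us l q \<le> us (l + 1) q" using kmono_us unfolding kmono_def by blast
qed (fact assms(2))

lemma us_decreasing:
  assumes "1 \<le> i" "i \<le> i'" "i' \<le> n" "\<And>l. i \<le> l \<Longrightarrow> l < i' \<Longrightarrow> alpha l < q"
  shows "us i' q \<le> us i q"
proof -
  have "- us i q \<le> - us i' q"
  proof (rule int_seq_le[where g = "\<lambda>l. - us l q"])
    fix l assume "i \<le> l" "l < i'"
    then have "l \<in> {1..n-1}" "alpha l < q" using assms by auto
    then show "- us l q \<le> - us (l + 1) q" using kmono_us unfolding kmono_def by auto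
  qed (fact assms(2))
  then show ?thesis by simp
qed

lemma us_beyond_n:
  assumes "i \<in> {1..n}" "n < t"
  shows "us i t = t"
proof -
  have alpha_t: "alpha l < t" if "1 \<le> l" "l < n" for l
    using alpha_less[of l] that assms(2) by simp
  have "us i t \<le> us 1 t" using assms alpha_t by (intro us_decreasing) auto
  moreover have "us n t \<le> us i t" using assms alpha_t by (intro us_decreasing) auto
  moreover have "U t = t" "W t = t" using U_Sperm W_Sperm assms(2) by (auto simp: Sperm_def)
  ultimately show ?thesis using us_1 us_n by simp
qed

lemma W_ge_imp_p:
  assumes "i \<in> {1..n-1}" "q \<le> alpha i" "i \<le> W q"
  shows "q = p i"
proof -
  have "q \<le> n" using alpha_less[OF assms(1)] assms(2) by simp
  have "W q \<in> {a..n}"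
  proof (rule ccontr)
    assume out: "W q \<notin> {a..n}"
    then have "q \<notin> {a..n}" using Sperm_maps_into[OF W_Sperm] by blast
    then have "W q = q" using W_Sperm by (simp add: Sperm_def)
    then show False using out assms a_le_1 \<open>q \<le> n\<close> by auto
  qed
  then have Wq: "W q \<in> {1..n}" using assms by auto
  have "inj W" using W_Sperm by (simp add: Sperm_def bij_is_inj)
  then have "p (W q) = q" using W_p[OF Wq] by (meson injD)
  then have "p (W q) < p (i + 1)" using assms(2) by (simp add: alpha_eq)
  then have "W q < i + 1"
    using strict_mono_on_less[OF p_strict_mono] Wq assms(1) by simp
  then show ?thesis using \<open>p (W q) = q\<close> assms(3) by simp
qed

lemma us_Suc_at_p_self:
  assumes i: "i \<in> {1..n-1}"
  shows "us (i + 1) (p i) = i"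
proof -
  have mono: "kmono (alpha i) (us i) (us (i + 1))" using kmono_us[OF i] .
  have "\<exists>q\<le>alpha i. i \<le> us (i + 1) q"
  proof -
    have "surj (us i)" using fin_perm_bij[OF fin_perm_us] i by (simp add: bij_is_surj)
    then obtain t where t: "us i t = i" by (metis surjD)
    show ?thesis
    proof (cases "t \<le> alpha i")
      case True
      then have "i \<le> us (i + 1) t" using mono t unfolding kmono_def by auto
      then show ?thesis using True by blast
    next
      case False
      have "t \<le> n" using us_beyond_n[of i t] t i by fastforce
      then have moved: "us (i + 1) t \<noteq> us i t"
        using not_fixed[OF i] t False unfolding fixI_def by auto
      have "\<forall>t>alpha i. us (i + 1) t \<noteq> us i t \<longrightarrow> (\<exists>q\<le>alpha i. us i t \<le> us (i + 1) q)"
        using mono unfolding kmono_def by blast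
      then obtain q where "q \<le> alpha i" "us i t \<le> us (i + 1) q"
        using False moved by (meson not_le)
      then show ?thesis using t by auto
    qed
  qed
  then obtain q where q: "q \<le> alpha i" "i \<le> us (i + 1) q" by blast
  have "us (i + 1) q \<le> us n q"
    using i q(1) alpha_mono[of i] by (intro us_increasing) (auto intro: order_trans)
  then have "us (i + 1) q \<le> W q" using us_n by simp
  then have "q = p i" using W_ge_imp_p[OF i q(1)] q(2) by simp
  then show ?thesis using \<open>us (i + 1) q \<le> W q\<close> q(2) W_p[of i] i by simp
qed

lemma us_at_p:
  assumes "1 \<le> j" "j < i" "i \<le> n"
  shows "us i (p j) = j"
proof -
  have le: "p j \<le> alpha l" if "j \<le> l" "l < n" for l
    using p_le_alpha assms that by simp
  have "j = us (j + 1) (p j)" using us_Suc_at_p_self[of j] assms by simp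
  also have "\<dots> \<le> us i (p j)" using assms le by (intro us_increasing) auto
  finally have "j \<le> us i (p j)" .
  moreover have "us i (p j) \<le> us n (p j)" using assms le by (intro us_increasing) auto
  ultimately show ?thesis using us_n W_p[of j] assms by simp
qed

lemma fixI_subset_nonpos:
  assumes i: "i \<in> {1..n-1}"
  shows "fixI {alpha i<..n} (us i) (us (i + 1)) \<inter> {a..i} \<subseteq> {a..0}"
proof
  fix x assume "x \<in> fixI {alpha i<..n} (us i) (us (i + 1)) \<inter> {a..i}"
  then obtain t where t: "t \<in> {alpha i<..n}" "x = us i t" "us (i + 1) t = us i t"
    and x: "x \<in> {a..i}"
    unfolding fixI_def by auto
  have "x \<le> 0"
  proof (rule ccontr)
    assume "\<not> x \<le> 0"
    moreover have "x \<noteq> i" using not_fixed[OF i] t unfolding fixI_def by auto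
    ultimately have "us i (p x) = us i t" using us_at_p[of x i] t x i by simp
    moreover have "inj (us i)" using fin_perm_bij[OF fin_perm_us] i by (simp add: bij_is_inj)
    ultimately have "p x = t" by (meson injD)
    moreover have "p x \<le> alpha i" using p_le_alpha[of x i] \<open>\<not> x \<le> 0\<close> \<open>x \<noteq> i\<close> x i by simp
    ultimately show False using t(1) by simp
  qed
  then show "x \<in> {a..0}" using x by simp
qed

end

lemma std_bcD:
  assumes "std_bc a n gN gE gS gW"
  shows std_bc_gN_defined: "\<And>r. r \<in> {1..n} \<Longrightarrow> gN r \<noteq> None"
    and std_bc_gN_less: "\<And>c c' x y. c \<in> {a..n} \<Longrightarrow> c' \<in> {a..n} \<Longrightarrow> gN c = Some x \<Longrightarrow>
          gN c' = Some y \<Longrightarrow> c < c' \<Longrightarrow> x < y"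
    and std_bc_gN_range: "\<And>c x. c \<in> {a..n} \<Longrightarrow> gN c = Some x \<Longrightarrow> x \<in> {a..n}"
proof -
  note bc = assms[unfolded std_bc_def]
  show "\<And>r. r \<in> {1..n} \<Longrightarrow> gN r \<noteq> None" using bc by (elim conjE) blast
  show "\<And>c c' x y. c \<in> {a..n} \<Longrightarrow> c' \<in> {a..n} \<Longrightarrow> gN c = Some x \<Longrightarrow>
          gN c' = Some y \<Longrightarrow> c < c' \<Longrightarrow> x < y" using bc by (elim conjE) blast
  show "\<And>c x. c \<in> {a..n} \<Longrightarrow> gN c = Some x \<Longrightarrow> x \<in> {a..n}" using bc by (elim conjE) blast
qed

lemma std_bc_pcol:
  assumes "std_bc a n gN gE gS gW" "a \<le> 1" "j \<in> {1..n}"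
  shows "gN j = Some (pcol gN j)" and "pcol gN j \<in> {a..n}"
proof -
  show gN: "gN j = Some (pcol gN j)" using std_bc_gN_defined[OF assms(1,3)] by (auto simp: pcol_def)
  show "pcol gN j \<in> {a..n}" using std_bc_gN_range[OF assms(1) _ gN] assms(2,3) by simp
qed

lemma std_bc_pcol_strict_mono:
  assumes "std_bc a n gN gE gS gW" "a \<le> 1"
  shows "strict_mono_on {1..n} (pcol gN)"
proof (rule strict_mono_onI)
  fix j j' assume "j \<in> {1..n}" "j' \<in> {1..n}" "j < j'"
  then show "pcol gN j < pcol gN j'"
    using std_bc_gN_less[OF assms(1) _ _ std_bc_pcol(1)[OF assms] std_bc_pcol(1)[OF assms]]
      assms(2) by simp
qed

lemma std_bc_gN_eqD:
  assumes "std_bc a n gN gE gS gW" "c \<in> {a..n}" "c' \<in> {a..n}" "gN c = Some x" "gN c' = Some x"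
  shows "c = c'"
  using std_bc_gN_less[OF assms(1)] assms(2-5) by (metis less_irrefl linorder_neqE)

lemma iota_eq_if_prefix_le:
  assumes "a \<le> l" "l \<le> n" "\<forall>q\<in>{a..l}. w q \<le> r"
  shows "iota a n r w l = w l"
proof -
  have "[a..n] = [a..l] @ [l + 1..n]" using assms(1,2) upto_split2 by blast
  then have "filter (\<lambda>x. x \<le> r) (map w [a..n]) =
      map w [a..l] @ filter (\<lambda>x. x \<le> r) (map w [l + 1..n])"
    using assms(3) by (simp add: filter_True)
  then show ?thesis using assms(1) by (simp add: iota_def nth_append)
qed

lemma Pset_1_at_pcol_1:
  assumes bc: "std_bc a n gN gE gS gW" and "a \<le> 1" "1 \<le> n" and W: "W \<in> Pset a n (pcol gN) 1"
    and "iota a n 1 W (pcol gN 1) \<in> {a..n}" "gN (iota a n 1 W (pcol gN 1)) = Some (pcol gN 1)"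
  shows "W (pcol gN 1) = 1"
proof -
  let ?p = "pcol gN"
  have p1: "?p 1 \<in> {a..n}" "gN 1 = Some (?p 1)" using std_bc_pcol[OF bc] assms(2,3) by auto
  have W_Sperm: "W \<in> Sperm a n" and W_p: "\<And>j. j \<in> {1<..n} \<Longrightarrow> W (?p j) = j"
    using W by (auto simp: Pset_def)
  have "W q \<le> 1" if q: "q \<in> {a..?p 1}" for q
  proof (rule ccontr)
    assume "\<not> W q \<le> 1"
    moreover have "W q \<in> {a..n}" using Sperm_maps_into[OF W_Sperm] q p1 by auto
    ultimately have j: "W q \<in> {1<..n}" by auto
    have "inj W" using W_Sperm by (simp add: Sperm_def bij_is_inj)
    then have "?p (W q) = q" using W_p[OF j] by (meson injD)
    moreover have "?p 1 < ?p (W q)"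
      using strict_mono_onD[OF std_bc_pcol_strict_mono[OF bc assms(2)]] j assms(3) by auto
    ultimately show False using q by simp
  qed
  then have "iota a n 1 W (?p 1) = W (?p 1)" using p1 by (intro iota_eq_if_prefix_le) auto
  then show ?thesis
    using std_bc_gN_eqD[OF bc, of "W (?p 1)" 1] assms(2,3,5,6) p1 by auto
qed

lemma wt_eq_prod_Sigma:
  "wt a n alpha v x y =
     (\<Prod>(i, j) \<in> Sigma {1..n-1} (\<lambda>i. fixI {alpha i<..n} (v i) (v (i + 1)) \<inter> {a..i}). x i - y j)"
  unfolding wt_def by (rule prod.Sigma) auto

theorem lemma4p16:
  fixes a n :: int and gN gE gS gW :: "int \<Rightarrow> int option"
    and U W :: "int \<Rightarrow> int" and us :: "int \<Rightarrow> int \<Rightarrow> int"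
  assumes "a \<le> 0" and "0 < n"
    and "std_bc a n gN gE gS gW"
    and "U \<in> Sperm a n"
    and "\<forall>l \<in> {a..n}. U l \<in> {a..n} \<and> gS (U l) = Some l"
    and "W \<in> Pset a n (pcol gN) 1"
    and "\<forall>l \<in> {a..pcol gN 1}. iota a n 1 W l \<in> {a..n} \<and> gN (iota a n 1 W l) = Some l"
    and "\<forall>l l'. pcol gN 1 < l \<and> l < l' \<and> l' \<le> 1 \<longrightarrow> iota a n 1 W l' < iota a n 1 W l"
    and "inCtilde n U W (alph gN) us"
  shows "(\<forall>i j. 1 \<le> j \<and> j < i \<and> i \<le> n \<longrightarrow> us i (pcol gN j) = j)
    \<and> (\<forall>i \<in> {1..n-1}. fixI {alph gN i<..n} (us i) (us (i + 1)) \<inter> {a..i} \<subseteq> {a..0})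
    \<and> (\<exists>S \<subseteq> {1..n-1} \<times> {a..0}. \<forall>y :: int \<Rightarrow> 'r::comm_ring_1.
          wt a n (alph gN) us y y = (\<Prod>(i, j) \<in> S. (y i - y j)))"
proof -
  have a: "a \<le> 1" and n: "1 \<le> n" using assms(1,2) by simp_all
  have "pcol gN 1 \<in> {a..n}" using std_bc_pcol(2)[OF assms(3) a] n by simp
  then have "W (pcol gN 1) = 1"
    using Pset_1_at_pcol_1[OF assms(3) a n assms(6)] assms(7) by simp
  then have W_p: "W (pcol gN j) = j" if "j \<in> {1..n}" for j
    using assms(6) that by (cases "j = 1") (auto simp: Pset_def)
  interpret tilde_chain a n "pcol gN" "alph gN" U W us
  proof
    show "pcol gN j \<le> n" if "j \<in> {1..n}" for j using std_bc_pcol(2)[OF assms(3) a that] by simp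
    show "W \<in> Sperm a n" using assms(6) by (simp add: Pset_def)
  qed (use std_bc_pcol_strict_mono[OF assms(3) a] a W_p assms(4,9) in \<open>simp_all add: alph_def\<close>)
  let ?S = "Sigma {1..n-1} (\<lambda>i. fixI {alph gN i<..n} (us i) (us (i + 1)) \<inter> {a..i})"
  have fixed: "\<forall>i \<in> {1..n-1}. fixI {alph gN i<..n} (us i) (us (i + 1)) \<inter> {a..i} \<subseteq> {a..0}"
    using fixI_subset_nonpos by blast
  show ?thesis
  proof (intro conjI allI impI exI[of _ ?S])
    show "us i (pcol gN j) = j" if "1 \<le> j \<and> j < i \<and> i \<le> n" for i j
      using us_at_p that by blast
    show "?S \<subseteq> {1..n-1} \<times> {a..0}" using fixed by blast
    show "wt a n (alph gN) us y y = (\<Prod>(i, j) \<in> ?S. (y i - y j))" for y :: "int \<Rightarrow> 'r"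
      by (rule wt_eq_prod_Sigma)
  qed (fact fixed)
qed

end
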